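(* Let $k\ge 0$ and $d\ge 1$ be integers. A vector $\mathfrak{c}=(c_1,\ldots,c_d)\in\mathbb{N}^d$ is the clique vector of a $k$-connected chordal graph if and only if the vector $\mathfrak{b}=(b_1,\ldots,b_d)$ defined by the polynomial identity \[ \sum_{i=1}^d b_i x^{i-1}=\sum_{i=1}^d c_i (x-1)^{i-1} \] has all components positive, $d\ge k$, and $b_1=b_2=\cdots=b_k=1$.
   Context: All graphs are finite and simple. The clique vector $\mathfrak{c}(G)$ of a graph $G$ is $(c_1,\ldots,c_d)$, where $c_i$ is the number of cliques (complete subgraphs) of $G$ with exactly $i$ vertices and $d$ is the largest cardinality of a clique in $G$ (the clique number). A graph is $k$-connected if it has at least $k$ vertices and removing any set of fewer than $k$ vertices yields a connected graph; by convention every graph is $0$-connected. A graph is chordal if every cycle of length at least $4$ has a chord. *)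

theory Defs
  imports "HOL-Computational_Algebra.Polynomial"
begin

definition simple_graph :: "'a set \<Rightarrow> ('a \<Rightarrow> 'a \<Rightarrow> bool) \<Rightarrow> bool" where
  "simple_graph V E \<longleftrightarrow> finite V \<and> (\<forall>u v. E u v \<longrightarrow> u \<in> V \<and> v \<in> V)
     \<and> (\<forall>u v. E u v \<longrightarrow> E v u) \<and> (\<forall>v. \<not> E v v)"

definition is_clique :: "'a set \<Rightarrow> ('a \<Rightarrow> 'a \<Rightarrow> bool) \<Rightarrow> 'a set \<Rightarrow> bool" where
  "is_clique V E K \<longleftrightarrow> K \<subseteq> V \<and> (\<forall>u\<in>K. \<forall>v\<in>K. u \<noteq> v \<longrightarrow> E u v)"

definition clique_number :: "'a set \<Rightarrow> ('a \<Rightarrow> 'a \<Rightarrow> bool) \<Rightarrow> nat" where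
  "clique_number V E = Max {card K | K. is_clique V E K}"

text \<open>Clique vector (c_1,...,c_d) as a list: entry i-1 is c_i.\<close>
definition clique_vector :: "'a set \<Rightarrow> ('a \<Rightarrow> 'a \<Rightarrow> bool) \<Rightarrow> nat list" where
  "clique_vector V E =
     map (\<lambda>i. card {K. is_clique V E K \<and> card K = i}) [1..<clique_number V E + 1]"

definition connected_on :: "'a set \<Rightarrow> ('a \<Rightarrow> 'a \<Rightarrow> bool) \<Rightarrow> bool" where
  "connected_on W E \<longleftrightarrow> (\<forall>u\<in>W. \<forall>v\<in>W. \<exists>p. p \<noteq> [] \<and> hd p = u \<and> last p = v
      \<and> set p \<subseteq> W \<and> (\<forall>i. Suc i < length p \<longrightarrow> E (p ! i) (p ! Suc i)))"

definition k_connected :: "nat \<Rightarrow> 'a set \<Rightarrow> ('a \<Rightarrow> 'a \<Rightarrow> bool) \<Rightarrow> bool" where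
  "k_connected k V E \<longleftrightarrow> k \<le> card V \<and>
     (\<forall>S. S \<subseteq> V \<and> card S < k \<longrightarrow> connected_on (V - S) E)"

definition chordal :: "'a set \<Rightarrow> ('a \<Rightarrow> 'a \<Rightarrow> bool) \<Rightarrow> bool" where
  "chordal V E \<longleftrightarrow> (\<forall>cs. distinct cs \<and> set cs \<subseteq> V \<and> length cs \<ge> 4
      \<and> (\<forall>i<length cs. E (cs ! i) (cs ! ((i + 1) mod length cs)))
      \<longrightarrow> (\<exists>i<length cs. \<exists>j<length cs. E (cs ! i) (cs ! j)
             \<and> j \<noteq> (i + 1) mod length cs \<and> i \<noteq> (j + 1) mod length cs \<and> i \<noteq> j))"

text \<open>The polynomial \<Sum>_{i=1}^d c_i (x-1)^(i-1); b_j is its coefficient of x^(j-1).\<close>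
definition b_poly :: "nat list \<Rightarrow> int poly" where
  "b_poly c = (\<Sum>i=1..length c. smult (int (c ! (i - 1))) ([:-1, 1:] ^ (i - 1)))"

end

theory Submission
  imports Defs
begin

text \<open>
  For a graph G let the clique polynomial be the sum over all nonempty cliques K of
  (x - 1)^(|K| - 1); it equals b_poly of the clique vector, and b_poly is injective on lists
  of a fixed length.  Deleting a simplicial vertex v removes exactly the cliques v + T with
  T inside N(v), which contribute x^deg(v).  Peeling a k-connected chordal graph down to a maximum clique of size d shows
  b_poly = 1 + x + ... + x^(d-1) + (monomials of degree at least k), giving necessity.
  Conversely, split graphs (a d-clique plus vertices joined to initial segments of it) are
  chordal, k-connected when all degrees are at least k, and realise every such polynomial,
  giving sufficiency.
\<close>

lemma b_poly_Cons: "b_poly (a # c) = [:int a:] + [:-1, 1:] * b_poly c"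
proof -
  have "b_poly (a # c) = smult (int a) 1
      + (\<Sum>i=Suc 1..Suc (length c). smult (int ((a # c) ! (i - 1))) ([:-1, 1:] ^ (i - 1)))"
    unfolding b_poly_def by (subst sum.atLeast_Suc_atMost) auto
  also have "(\<Sum>i=Suc 1..Suc (length c). smult (int ((a # c) ! (i - 1))) ([:-1, 1:] ^ (i - 1)))
      = [:-1, 1:] * b_poly c"
    unfolding sum.shift_bounds_cl_Suc_ivl b_poly_def sum_distrib_left
    by (rule sum.cong) (auto simp: mult_smult_right power_Suc[symmetric] simp del: power_Suc
        intro!: arg_cong[where f = "\<lambda>n. _ ^ n"])
  finally show ?thesis by (simp add: smult_one)
qed

text \<open>Lists of equal length are determined by their b-polynomial (evaluate at 1, divide by x - 1).\<close>
lemma b_poly_inj: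
  assumes "length c = length c'" and "b_poly c = b_poly c'"
  shows "c = c'"
  using assms
proof (induction c arbitrary: c')
  case Nil
  then show ?case by simp
next
  case (Cons a c)
  then obtain a' c'' where c': "c' = a' # c''" by (cases c') auto
  have eq: "[:int a:] + [:-1, 1:] * b_poly c = [:int a':] + [:-1, 1:] * b_poly c''"
    using Cons.prems by (simp add: c' b_poly_Cons)
  from arg_cong[OF eq, of "\<lambda>p. poly p 1"] have "a = a'" by simp
  with eq have "b_poly c = b_poly c''" by (simp del: mult_pCons_left)
  with Cons show ?case by (simp add: c' \<open>a = a'\<close>)
qed

lemma b_poly_coeff_high: "length c \<le> m \<Longrightarrow> coeff (b_poly c) m = 0"
proof (induction c arbitrary: m)
  case Nil
  then show ?case by (simp add: b_poly_def)
next
  case (Cons a c)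
  then obtain m' where m: "m = Suc m'" by (cases m) auto
  have "[:-1, 1::int:] * b_poly c = - b_poly c + pCons 0 (b_poly c)"
    by (simp add: mult_pCons_left)
  then show ?case using Cons by (simp add: b_poly_Cons m coeff_pCons)
qed

definition nbr :: "('a \<Rightarrow> 'a \<Rightarrow> bool) \<Rightarrow> 'a \<Rightarrow> 'a set" where
  "nbr E v = {w. E v w}"

definition induced :: "('a \<Rightarrow> 'a \<Rightarrow> bool) \<Rightarrow> 'a set \<Rightarrow> 'a \<Rightarrow> 'a \<Rightarrow> bool" where
  "induced E W = (\<lambda>x y. E x y \<and> x \<in> W \<and> y \<in> W)"

definition simplicial :: "'a set \<Rightarrow> ('a \<Rightarrow> 'a \<Rightarrow> bool) \<Rightarrow> 'a \<Rightarrow> bool" where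
  "simplicial V E v \<longleftrightarrow> v \<in> V \<and> is_clique V E (nbr E v)"

definition cliques :: "'a set \<Rightarrow> ('a \<Rightarrow> 'a \<Rightarrow> bool) \<Rightarrow> 'a set set" where
  "cliques V E = {K. is_clique V E K \<and> K \<noteq> {}}"

definition clique_poly :: "'a set \<Rightarrow> ('a \<Rightarrow> 'a \<Rightarrow> bool) \<Rightarrow> int poly" where
  "clique_poly V E = (\<Sum>K\<in>cliques V E. [:-1, 1:] ^ (card K - 1))"

lemma simple_graph_induced: "simple_graph V E \<Longrightarrow> W \<subseteq> V \<Longrightarrow> simple_graph W (induced E W)"
  unfolding simple_graph_def induced_def by (auto intro: finite_subset)

lemma simple_graphD:
  assumes "simple_graph V E"
  shows simple_graph_finite: "finite V"
    and simple_graph_edge: "E a b \<Longrightarrow> a \<in> V \<and> b \<in> V"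
    and simple_graph_sym: "E a b \<Longrightarrow> E b a"
    and simple_graph_irrefl: "\<not> E a a"
  using assms unfolding simple_graph_def by blast+

lemma induced_induced: "K \<subseteq> W \<Longrightarrow> induced (induced E W) K = induced E K"
  unfolding induced_def by auto

lemma clique_induced_iff: "W \<subseteq> V \<Longrightarrow> is_clique W (induced E W) K \<longleftrightarrow> K \<subseteq> W \<and> is_clique V E K"
  unfolding is_clique_def induced_def by blast

lemma cliques_induced_self: "cliques V (induced E V) = cliques V E"
  unfolding cliques_def is_clique_def induced_def by blast

lemma finite_cliques: "simple_graph V E \<Longrightarrow> finite {K. is_clique V E K}"
  unfolding simple_graph_def is_clique_def by (rule finite_subset[of _ "Pow V"]) auto

lemma clique_card_le: "simple_graph V E \<Longrightarrow> is_clique V E K \<Longrightarrow> card K \<le> clique_number V E"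
  unfolding clique_number_def by (rule Max_ge) (use finite_cliques[of V E] in auto)

text \<open>The clique number is the size of some clique (the empty set is a clique).\<close>
lemma clique_number_attained:
  assumes "simple_graph V E"
  obtains K where "is_clique V E K" "card K = clique_number V E"
proof -
  have "finite {card K | K. is_clique V E K}" using finite_cliques[OF assms] by simp
  moreover have "is_clique V E {}" by (simp add: is_clique_def)
  then have "{card K | K. is_clique V E K} \<noteq> {}" by blast
  ultimately have "clique_number V E \<in> {card K | K. is_clique V E K}"
    unfolding clique_number_def by (intro Max_in) auto
  then show ?thesis using that by auto
qed

text \<open>The b-polynomial of the clique vector is the clique polynomial: group cliques by size.\<close>
lemma b_poly_clique_vector:
  assumes s: "simple_graph V E"
  shows "b_poly (clique_vector V E) = clique_poly V E"
proof -
  let ?n = "clique_number V E" and ?f = "\<lambda>i::nat. [:-1, 1::int:] ^ (i - 1)"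
  have fin: "finite (cliques V E)"
    using finite_cliques[OF s] unfolding cliques_def by (rule finite_subset[rotated]) auto
  have sizes: "card ` cliques V E \<subseteq> {1..?n}"
  proof
    fix x assume "x \<in> card ` cliques V E"
    then obtain K where K: "is_clique V E K" "K \<noteq> {}" "x = card K" by (auto simp: cliques_def)
    have "finite K" using K(1) s finite_subset by (auto simp: is_clique_def simple_graph_def)
    then show "x \<in> {1..?n}"
      using K clique_card_le[OF s K(1)] by (auto simp: Suc_le_eq card_gt_0_iff)
  qed
  have "clique_poly V E = (\<Sum>i=1..?n. \<Sum>K\<in>{K \<in> cliques V E. card K = i}. ?f (card K))"
    unfolding clique_poly_def by (rule sum.group[symmetric, OF fin finite_atLeastAtMost sizes])
  also have "\<dots> = (\<Sum>i=1..?n. smult (int (card {K. is_clique V E K \<and> card K = i})) (?f i))"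
  proof (rule sum.cong[OF refl])
    fix i assume "i \<in> {1..?n}"
    then have "{K \<in> cliques V E. card K = i} = {K. is_clique V E K \<and> card K = i}"
      by (auto simp: cliques_def)
    then show "(\<Sum>K\<in>{K \<in> cliques V E. card K = i}. ?f (card K))
        = smult (int (card {K. is_clique V E K \<and> card K = i})) (?f i)"
      by (simp add: of_nat_mult_conv_smult)
  qed
  also have "\<dots> = b_poly (clique_vector V E)"
    unfolding b_poly_def clique_vector_def by (rule sum.cong) (auto simp del: upt_Suc)
  finally show ?thesis by simp
qed

lemma sum_Pow_power:
  assumes "finite A"
  shows "(\<Sum>T\<in>Pow A. (y::'b::comm_semiring_1) ^ card T) = (y + 1) ^ card A"
  using prod_add[OF assms, of "\<lambda>_. y" "\<lambda>_. 1"] by simp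

lemma cliques_remove_simplicial:
  assumes s: "simple_graph V E" and v: "simplicial V E v"
  shows "cliques V E = cliques (V - {v}) (induced E (V - {v})) \<union> insert v ` Pow (nbr E v)"
proof (intro equalityI subsetI)
  fix K assume K: "K \<in> cliques V E"
  show "K \<in> cliques (V - {v}) (induced E (V - {v})) \<union> insert v ` Pow (nbr E v)"
  proof (cases "v \<in> K")
    case True
    then have "K - {v} \<subseteq> nbr E v" "K = insert v (K - {v})"
      using K by (auto simp: cliques_def is_clique_def nbr_def)
    then show ?thesis by blast
  next
    case False
    then show ?thesis using K by (auto simp: cliques_def is_clique_def induced_def)
  qed
next
  fix K assume K: "K \<in> cliques (V - {v}) (induced E (V - {v})) \<union> insert v ` Pow (nbr E v)"
  show "K \<in> cliques V E"
  proof (cases "K \<in> cliques (V - {v}) (induced E (V - {v}))")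
    case True
    then show ?thesis unfolding cliques_def is_clique_def induced_def by blast
  next
    case False
    then obtain T where T: "T \<subseteq> nbr E v" "K = insert v T" using K by auto
    have sym: "\<And>x y. E x y \<Longrightarrow> E y x" by (rule simple_graph_sym[OF s])
    have TV: "T \<subseteq> V" and Tcl: "\<And>x y. x \<in> T \<Longrightarrow> y \<in> T \<Longrightarrow> x \<noteq> y \<Longrightarrow> E x y"
      using T(1) v by (auto simp: simplicial_def is_clique_def)
    have Tv: "\<And>x. x \<in> T \<Longrightarrow> E v x \<and> E x v" using T(1) sym by (auto simp: nbr_def)
    have "K \<subseteq> V" using TV T(2) v by (simp add: simplicial_def)
    moreover have "\<forall>x\<in>K. \<forall>y\<in>K. x \<noteq> y \<longrightarrow> E x y" using T(2) Tcl Tv by blast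
    ultimately show ?thesis using T(2) by (simp add: cliques_def is_clique_def)
  qed
qed

text \<open>Removing a simplicial vertex v drops the clique polynomial by x^deg(v), since the
  subsets T of N(v) contribute the sum of (x - 1)^|T|, which is x^|N(v)|.\<close>
lemma clique_poly_remove_simplicial:
  assumes s: "simple_graph V E" and v: "simplicial V E v"
  shows "clique_poly V E = clique_poly (V - {v}) (induced E (V - {v})) + monom 1 (card (nbr E v))"
proof -
  have fV: "finite V" and nv: "v \<notin> nbr E v"
    using simple_graph_finite[OF s] simple_graph_irrefl[OF s] by (auto simp: nbr_def)
  have fN: "finite (nbr E v)"
    using v finite_subset[OF _ fV] by (simp add: simplicial_def is_clique_def)
  have fin: "finite (cliques V E)"
    using finite_cliques[OF s] unfolding cliques_def by (rule finite_subset[rotated]) auto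
  have inj: "inj_on (insert v) (Pow (nbr E v))" using nv by (auto simp: inj_on_def)
  have "clique_poly V E = clique_poly (V - {v}) (induced E (V - {v}))
      + (\<Sum>K\<in>insert v ` Pow (nbr E v). [:-1, 1:] ^ (card K - 1))"
    unfolding clique_poly_def cliques_remove_simplicial[OF s v]
  proof (rule sum.union_disjoint)
    show "finite (cliques (V - {v}) (induced E (V - {v})))"
      using fin unfolding cliques_remove_simplicial[OF s v] by blast
    show "finite (insert v ` Pow (nbr E v))" using fN by simp
    show "cliques (V - {v}) (induced E (V - {v})) \<inter> insert v ` Pow (nbr E v) = {}"
      by (auto simp: cliques_def is_clique_def)
  qed
  also have "(\<Sum>K\<in>insert v ` Pow (nbr E v). [:-1, 1::int:] ^ (card K - 1))
      = (\<Sum>T\<in>Pow (nbr E v). [:-1, 1:] ^ card T)"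
    unfolding sum.reindex[OF inj, unfolded comp_def]
  proof (rule sum.cong[OF refl])
    fix T assume "T \<in> Pow (nbr E v)"
    then have "finite T" "v \<notin> T" using fN nv by (auto intro: finite_subset)
    then show "[:-1, 1::int:] ^ (card (insert v T) - 1) = [:-1, 1:] ^ card T" by simp
  qed
  also have "\<dots> = monom 1 (card (nbr E v))"
  proof -
    have "[:-1, 1::int:] + 1 = [:0, 1:]" by (simp add: one_pCons)
    then show ?thesis by (simp add: sum_Pow_power[OF fN] monom_altdef)
  qed
  finally show ?thesis .
qed

text \<open>A complete graph on n vertices has clique polynomial 1 + x + ... + x^(n-1)
  (remove its vertices one at a time).\<close>
lemma clique_poly_complete:
  "simple_graph V E \<Longrightarrow> is_clique V E V \<Longrightarrow> clique_poly V E = (\<Sum>j<card V. monom 1 j)"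
proof (induction "card V" arbitrary: V E)
  case 0
  then have "V = {}" using simple_graph_finite[OF "0.prems"(1)] by simp
  then show ?case by (simp add: clique_poly_def cliques_def is_clique_def)
next
  case (Suc n)
  then obtain v where v: "v \<in> V" by fastforce
  have fV: "finite V" by (rule simple_graph_finite[OF Suc.prems(1)])
  have irr: "\<not> E v v" by (rule simple_graph_irrefl[OF Suc.prems(1)])
  have inV: "\<And>w. E v w \<Longrightarrow> w \<in> V" using simple_graph_edge[OF Suc.prems(1)] by blast
  have nb: "nbr E v = V - {v}" using Suc.prems(2) v irr inV by (auto simp: is_clique_def nbr_def)
  have sv: "simplicial V E v" using Suc.prems(2) v unfolding nb simplicial_def is_clique_def by blast
  have cV: "card (V - {v}) = n" using Suc.hyps(2) v fV by simp
  have s': "simple_graph (V - {v}) (induced E (V - {v}))"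
    using simple_graph_induced[OF Suc.prems(1)] by blast
  have c': "is_clique (V - {v}) (induced E (V - {v})) (V - {v})"
    using Suc.prems(2) unfolding is_clique_def induced_def by blast
  have "clique_poly V E = clique_poly (V - {v}) (induced E (V - {v})) + monom 1 (card (nbr E v))"
    by (rule clique_poly_remove_simplicial[OF Suc.prems(1) sv])
  also have "\<dots> = (\<Sum>j<n. monom 1 j) + monom 1 n"
    using Suc.hyps(1)[OF cV[symmetric] s' c'] cV nb by simp
  finally show ?case by (simp add: Suc.hyps(2)[symmetric])
qed

lemma clique_poly_of_clique:
  assumes s: "simple_graph V E" and K: "is_clique V E K"
  shows "clique_poly K (induced E K) = (\<Sum>j<card K. monom 1 j)"
proof -
  have KV: "K \<subseteq> V" using K by (simp add: is_clique_def)
  have "is_clique K (induced E K) K" using clique_induced_iff[OF KV] K by blast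
  then show ?thesis by (rule clique_poly_complete[OF simple_graph_induced[OF s KV]])
qed

definition walk :: "('a \<Rightarrow> 'a \<Rightarrow> bool) \<Rightarrow> 'a set \<Rightarrow> 'a list \<Rightarrow> 'a \<Rightarrow> 'a \<Rightarrow> bool" where
  "walk E W p a b \<longleftrightarrow> p \<noteq> [] \<and> hd p = a \<and> last p = b \<and> set p \<subseteq> W \<and> successively E p"

lemma connected_on_walk: "connected_on W E \<longleftrightarrow> (\<forall>u\<in>W. \<forall>v\<in>W. \<exists>p. walk E W p u v)"
  unfolding connected_on_def walk_def successively_conv_nth by blast

lemma walk_of_rtranclp: "(induced E W)\<^sup>*\<^sup>* a b \<Longrightarrow> a \<in> W \<Longrightarrow> \<exists>p. walk E W p a b"
proof (induction rule: rtranclp_induct)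
  case base
  have "walk E W [a] a a" using base by (simp add: walk_def)
  then show ?case by blast
next
  case (step y z)
  then obtain p where p: "walk E W p a y" by blast
  have "walk E W (p @ [z]) a z"
    using p step(2) by (auto simp: walk_def induced_def successively_append_iff)
  then show ?case by blast
qed

lemma walk_rev: "(\<And>x y. E x y \<Longrightarrow> E y x) \<Longrightarrow> walk E W p a b \<Longrightarrow> walk E W (rev p) b a"
  unfolding walk_def by (auto simp: hd_rev last_rev elim: successively_mono)

lemma walk_append:
  assumes p: "walk E W p a b" and q: "walk E W q b c"
  shows "walk E W (p @ tl q) a c"
proof -
  obtain q' where q': "q = b # q'" using q by (cases q) (auto simp: walk_def)
  show ?thesis
  proof (cases "q' = []")
    case True
    then show ?thesis using p q q' by (simp add: walk_def)
  next
    case False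
    then have "E b (hd q')" "successively E q'"
      using q q' by (auto simp: walk_def successively_Cons)
    then show ?thesis using p q q' False
      by (auto simp: walk_def successively_append_iff list.set_sel(2))
  qed
qed

lemma walk_induced: "walk E W p a b \<Longrightarrow> W \<subseteq> X \<Longrightarrow> walk (induced E X) W p a b"
  unfolding walk_def induced_def by (auto elim!: successively_mono)

lemma walk_shortcut_dup: "walk E W (xs @ z # ys @ z # zs) a b \<Longrightarrow> walk E W (xs @ z # zs) a b"
  unfolding walk_def
  by (cases xs; cases zs) (auto simp: successively_append_iff successively_Cons hd_append split: if_splits)

lemma walk_shortcut_edge:
  "walk E W (xs @ z1 # ys @ z2 # zs) a b \<Longrightarrow> E z1 z2 \<Longrightarrow> walk E W (xs @ z1 # z2 # zs) a b"
  unfolding walk_def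
  by (cases xs; cases zs) (auto simp: successively_append_iff successively_Cons hd_append split: if_splits)

lemma list_split2:
  assumes "i < j" "j < length q"
  shows "q = take i q @ q ! i # take (j - Suc i) (drop (Suc i) q) @ q ! j # drop (Suc j) q"
proof -
  have "q = take i q @ q ! i # drop (Suc i) q" using assms by (simp add: Cons_nth_drop_Suc)
  also have "drop (Suc i) q = take (j - Suc i) (drop (Suc i) q) @ q ! j # drop (Suc j) q"
    using assms by (metis Cons_nth_drop_Suc Suc_leI append_take_drop_id drop_drop le_add_diff_inverse2)
  finally show ?thesis .
qed

text \<open>A shortest walk is an induced path: its vertices are distinct and only consecutive ones are
  adjacent.\<close>
lemma induced_walk:
  assumes "walk E W p a b"
  obtains q where "walk E W q a b" "distinct q"
    "\<And>i j. Suc i < j \<Longrightarrow> j < length q \<Longrightarrow> \<not> E (q ! i) (q ! j)"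
proof -
  obtain q where q: "walk E W q a b" and qmin: "\<And>q'. walk E W q' a b \<Longrightarrow> length q \<le> length q'"
    using ex_has_least_nat[of "\<lambda>q. walk E W q a b" p length] assms by blast
  have "distinct q"
  proof (rule ccontr)
    assume "\<not> distinct q"
    then obtain i j where ij: "i < j" "j < length q" "q ! i = q ! j"
      by (metis distinct_conv_nth linorder_neqE_nat)
    let ?xs = "take i q" and ?ys = "take (j - Suc i) (drop (Suc i) q)" and ?zs = "drop (Suc j) q"
    have "walk E W (?xs @ q ! i # ?ys @ q ! i # ?zs) a b"
      using q list_split2[OF ij(1,2)] ij(3) by simp
    then have "walk E W (?xs @ q ! i # ?zs) a b" by (rule walk_shortcut_dup)
    with qmin[OF this] ij show False by simp
  qed
  moreover have "\<not> E (q ! i) (q ! j)" if ij: "Suc i < j" "j < length q" for i j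
  proof
    assume e: "E (q ! i) (q ! j)"
    let ?xs = "take i q" and ?ys = "take (j - Suc i) (drop (Suc i) q)" and ?zs = "drop (Suc j) q"
    have "walk E W (?xs @ q ! i # ?ys @ q ! j # ?zs) a b"
      using q list_split2[of i j q] ij by simp
    then have "walk E W (?xs @ q ! i # q ! j # ?zs) a b" using e by (rule walk_shortcut_edge)
    with qmin[OF this] ij show False by simp
  qed
  ultimately show ?thesis using q that by blast
qed

lemma chordal_induced:
  assumes ch: "chordal V E" and W: "W \<subseteq> V"
  shows "chordal W (induced E W)"
  unfolding chordal_def
proof (intro allI impI)
  fix cs
  assume cs: "distinct cs \<and> set cs \<subseteq> W \<and> 4 \<le> length cs
      \<and> (\<forall>i<length cs. induced E W (cs ! i) (cs ! ((i + 1) mod length cs)))"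
  then obtain i j where ij: "i < length cs" "j < length cs" "E (cs ! i) (cs ! j)"
      "j \<noteq> (i + 1) mod length cs" "i \<noteq> (j + 1) mod length cs" "i \<noteq> j"
    using ch W unfolding chordal_def induced_def by (metis (no_types, lifting) order_trans)
  moreover have "cs ! i \<in> W" "cs ! j \<in> W" using cs ij(1,2) nth_mem by blast+
  ultimately show "\<exists>i<length cs. \<exists>j<length cs. induced E W (cs ! i) (cs ! j)
      \<and> j \<noteq> (i + 1) mod length cs \<and> i \<noteq> (j + 1) mod length cs \<and> i \<noteq> j"
    unfolding induced_def by blast
qed

lemma path_closed_by_vertex:
  assumes path: "successively E q" and qne: "q \<noteq> []"
    and q0: "E u (q ! 0)" and ql: "E (q ! (length q - 1)) u"
  shows "\<forall>i<length (u # q). E ((u # q) ! i) ((u # q) ! ((i + 1) mod length (u # q)))"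
proof (intro allI impI)
  fix i assume i: "i < length (u # q)"
  let ?cs = "u # q" and ?n = "length (u # q)"
  show "E (?cs ! i) (?cs ! ((i + 1) mod ?n))"
  proof (cases "i = 0")
    case True
    then show ?thesis using q0 qne by simp
  next
    case i0: False
    show ?thesis
    proof (cases "i = length q")
      case True
      then show ?thesis using ql i0 by simp
    next
      case False
      then have "(i + 1) mod ?n = i + 1" using i by simp
      moreover have "E (q ! (i - 1)) (q ! i)" using successively_nth[OF path, of "i - 1"] i0 False i by simp
      ultimately show ?thesis using i0 by (cases i) auto
    qed
  qed
qed

text \<open>A chordal graph has no chordless cycle of length at least 4: if q is an induced path
  with at least three vertices and u is adjacent to both ends of q but to no inner vertex,
  then u followed by q would be such a cycle.\<close>
lemma chordal_no_induced_cycle: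
  assumes ch: "chordal V E" and sym: "\<And>a b. E a b \<Longrightarrow> E b a"
    and V: "set (u # q) \<subseteq> V" and dist: "distinct (u # q)" and l3: "3 \<le> length q"
    and path: "successively E q" and ends: "E u (hd q)" "E u (last q)"
    and no_chord: "\<And>i j. Suc i < j \<Longrightarrow> j < length q \<Longrightarrow> \<not> E (q ! i) (q ! j)"
    and inner: "\<And>i. 0 < i \<Longrightarrow> i < length q - 1 \<Longrightarrow> \<not> E u (q ! i)"
  shows False
proof -
  let ?cs = "u # q"
  let ?n = "length ?cs"
  have qne: "q \<noteq> []" using l3 by auto
  have q0: "E u (q ! 0)" and ql: "E (q ! (length q - 1)) u"
    using qne ends sym by (simp_all add: hd_conv_nth last_conv_nth)
  have "\<forall>i<?n. E (?cs ! i) (?cs ! ((i + 1) mod ?n))"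
    using path_closed_by_vertex[OF path] qne q0 ql by blast
  moreover have "4 \<le> ?n" using l3 by simp
  ultimately obtain i j where ij: "i < ?n" "j < ?n" "E (?cs ! i) (?cs ! j)"
      "j \<noteq> (i + 1) mod ?n" "i \<noteq> (j + 1) mod ?n" "i \<noteq> j"
    using ch V dist unfolding chordal_def by blast
  have wrap: "(length q + 1) mod ?n = 0" by simp
  have u_chord: False if "a < ?n" "a \<noteq> 0" "E u (?cs ! a)" "a \<noteq> 1" "a \<noteq> length q" for a
    using that inner[of "a - 1"] by (cases a) (auto simp: less_diff_conv)
  show False
  proof (cases "i = 0")
    case True
    then have "j \<noteq> 1" "j \<noteq> length q" using ij(4,5) wrap l3 qne by auto
    then show False using u_chord[of j] ij True by simp
  next
    case i0: False
    show False
    proof (cases "j = 0")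
      case True
      then have "i \<noteq> 1" "i \<noteq> length q" using ij(4,5) wrap l3 qne by auto
      then show False using u_chord[of i] ij True sym i0 by simp
    next
      case j0: False
      have e: "E (q ! (i - 1)) (q ! (j - 1))" using ij(3) i0 j0 by (cases i; cases j) auto
      show False
      proof (cases "i < j")
        case True
        then have "Suc (i - 1) < j - 1" using ij(2,4) i0 by auto
        moreover have "j - 1 < length q" using ij(2) j0 by simp
        ultimately show False using no_chord e by blast
      next
        case False
        then have "Suc (j - 1) < i - 1" using ij(1,5,6) j0 by auto
        moreover have "i - 1 < length q" using ij(1) i0 by simp
        ultimately show False using no_chord sym[OF e] by blast
      qed
    qed
  qed
qed

definition component :: "('a \<Rightarrow> 'a \<Rightarrow> bool) \<Rightarrow> 'a set \<Rightarrow> 'a \<Rightarrow> 'a set" where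
  "component E W c0 = {c. (induced E W)\<^sup>*\<^sup>* c0 c}"

lemma component_subset:
  assumes "c0 \<in> W"
  shows "component E W c0 \<subseteq> W"
proof
  fix c assume "c \<in> component E W c0"
  then have "(induced E W)\<^sup>*\<^sup>* c0 c" by (simp add: component_def)
  then show "c \<in> W" using assms by (induction rule: rtranclp_induct) (auto simp: induced_def)
qed

lemma component_closed:
  "c \<in> component E W c0 \<Longrightarrow> c \<in> W \<Longrightarrow> z \<in> W \<Longrightarrow> E c z \<Longrightarrow> z \<in> component E W c0"
  unfolding component_def induced_def by (simp add: rtranclp.rtrancl_into_rtrancl)

lemma component_walk:
  assumes sym: "\<And>a b. E a b \<Longrightarrow> E b a" and c0: "c0 \<in> W"
    and c: "c1 \<in> component E W c0" "c2 \<in> component E W c0"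
  shows "\<exists>p. walk E (component E W c0) p c1 c2"
proof -
  let ?C = "component E W c0"
  have walk_from_c0: "\<exists>p. walk E ?C p c0 c" if "c \<in> ?C" for c
  proof -
    have "(induced E W)\<^sup>*\<^sup>* c0 c" using that by (simp add: component_def)
    then have "(induced E ?C)\<^sup>*\<^sup>* c0 c"
    proof (induction rule: rtranclp_induct)
      case (step y z)
      then have "y \<in> ?C" "z \<in> ?C"
        by (auto simp: component_def intro: rtranclp.rtrancl_into_rtrancl)
      then have "induced E ?C y z" using step(2) by (simp add: induced_def)
      then show ?case by (rule rtranclp.rtrancl_into_rtrancl[OF step(3)])
    qed simp
    moreover have "c0 \<in> ?C" by (simp add: component_def)
    ultimately show ?thesis by (rule walk_of_rtranclp)
  qed
  obtain p1 p2 where "walk E ?C p1 c0 c1" "walk E ?C p2 c0 c2"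
    using walk_from_c0 c by blast
  then have "walk E ?C (rev p1 @ tl p2) c1 c2" by (intro walk_append walk_rev[OF sym])
  then show ?thesis by blast
qed

text \<open>Key lemma behind Dirac's theorem: let C be a connected vertex set avoiding the closed
  neighbourhood of u. Then any two neighbours of u outside C that both have a neighbour in C
  are adjacent, since otherwise an induced path through C closes a chordless cycle with u.\<close>
lemma component_neighbours_adjacent:
  assumes s: "simple_graph V E" and ch: "chordal V E" and u: "u \<in> V"
    and C: "C \<subseteq> V" "\<And>c. c \<in> C \<Longrightarrow> c \<noteq> u \<and> \<not> E u c"
    and C_conn: "\<And>c1 c2. c1 \<in> C \<Longrightarrow> c2 \<in> C \<Longrightarrow> \<exists>p. walk E C p c1 c2"
    and x: "E u x" "x \<notin> C" "cx \<in> C" "E x cx"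
    and y: "E u y" "y \<notin> C" "cy \<in> C" "E cy y"
    and xy: "x \<noteq> y"
  shows "E x y"
proof (rule ccontr)
  assume nxy: "\<not> E x y"
  have sym: "\<And>a b. E a b \<Longrightarrow> E b a" by (rule simple_graph_sym[OF s])
  have irr: "\<And>a. \<not> E a a" by (rule simple_graph_irrefl[OF s])
  have inV: "\<And>a b. E a b \<Longrightarrow> a \<in> V \<and> b \<in> V" by (rule simple_graph_edge[OF s])
  let ?W = "insert x (insert y C)"
  obtain pc where pc: "walk E C pc cx cy" using C_conn x(3) y(3) by blast
  have "walk E ?W (x # pc @ [y]) x y"
    using pc x y by (cases pc) (auto simp: walk_def successively_append_iff successively_Cons hd_append)
  then obtain q where q: "walk E ?W q x y" "distinct q"
    and no_chord: "\<And>i j. Suc i < j \<Longrightarrow> j < length q \<Longrightarrow> \<not> E (q ! i) (q ! j)"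
    by (rule induced_walk) blast
  have qne: "q \<noteq> []" and q0: "q ! 0 = x" and ql: "q ! (length q - 1) = y" and qW: "set q \<subseteq> ?W"
    and path: "successively E q"
    using q by (auto simp: walk_def hd_conv_nth last_conv_nth)
  have l3: "3 \<le> length q"
  proof (rule ccontr)
    assume "\<not> 3 \<le> length q"
    moreover have "length q \<noteq> 1" using q0 ql xy by (metis diff_self_eq_0)
    moreover have "length q \<noteq> 0" using qne by simp
    ultimately have "length q = 2" by linarith
    then show False using successively_nth[OF path, of 0] q0 ql nxy by simp
  qed
  have inner: "q ! i \<in> C" if "0 < i" "i < length q - 1" for i
  proof -
    have "i < length q" using that by simp
    then have "q ! i \<in> ?W" using qW nth_mem by blast
    moreover have "q ! i \<noteq> q ! 0" using q(2) that by (subst nth_eq_iff_index_eq) auto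
    moreover have "q ! i \<noteq> q ! (length q - 1)" using q(2) that by (subst nth_eq_iff_index_eq) auto
    ultimately show ?thesis using q0 ql by auto
  qed
  have "u \<notin> ?W" using x(1) y(1) irr C(2) by auto
  then have "distinct (u # q)" using q(2) qW by auto
  moreover have "set (u # q) \<subseteq> V" using u qW C(1) inV x(1) y(1) by auto
  moreover have "E u (hd q)" "E u (last q)"
    using q(1) x(1) y(1) by (simp_all add: walk_def)
  moreover have "\<not> E u (q ! i)" if "0 < i" "i < length q - 1" for i
    using inner[OF that] C(2) by blast
  ultimately show False
    using chordal_no_induced_cycle[OF ch sym _ _ l3 path _ _ no_chord] by blast
qed

text \<open>For a non-neighbour c0 of u, let C be the component of c0 in the graph minus the closed
  neighbourhood of u and N the set of outside neighbours of C.\<close>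
lemma component_with_clique_boundary:
  assumes s: "simple_graph V E" and ch: "chordal V E" and u: "u \<in> V"
    and c0: "c0 \<in> V" "c0 \<noteq> u" "\<not> E u c0"
  obtains C N where "c0 \<in> C" "C \<inter> insert u (nbr E u) = {}" "N \<subseteq> nbr E u" "C \<union> N \<subseteq> V"
    "C \<inter> N = {}" "is_clique V E N" "\<And>v. v \<in> C \<Longrightarrow> nbr E v \<subseteq> C \<union> N"
proof -
  have sym: "\<And>a b. E a b \<Longrightarrow> E b a" by (rule simple_graph_sym[OF s])
  have inV: "\<And>a b. E a b \<Longrightarrow> a \<in> V \<and> b \<in> V" by (rule simple_graph_edge[OF s])
  define W where "W = V - insert u (nbr E u)"
  define C where "C = component E W c0"
  define N where "N = {z \<in> V - C. \<exists>c\<in>C. E c z}"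
  have c0W: "c0 \<in> W" using c0 by (auto simp: W_def nbr_def)
  have CW: "C \<subseteq> W" unfolding C_def by (rule component_subset[OF c0W])
  have c0C: "c0 \<in> C" by (simp add: C_def component_def)
  have N_nbr: "E u z" if "z \<in> N" for z
  proof -
    obtain c where c: "c \<in> C" "E c z" "z \<notin> C" "z \<in> V" using \<open>z \<in> N\<close> by (auto simp: N_def)
    have "z \<notin> W"
    proof
      assume "z \<in> W"
      then have "z \<in> C" using component_closed[of c E W c0 z] c(1,2) CW unfolding C_def by blast
      then show False using c(3) by contradiction
    qed
    moreover have "z \<noteq> u"
    proof
      assume "z = u"
      then have "E u c" using sym c(2) by blast
      then show False using c(1) CW by (auto simp: W_def nbr_def)
    qed
    ultimately show ?thesis using c by (auto simp: W_def nbr_def)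
  qed
  have C_avoid: "c \<noteq> u \<and> \<not> E u c" if "c \<in> C" for c using that CW by (auto simp: W_def nbr_def)
  have C_conn: "\<exists>p. walk E C p c1 c2" if "c1 \<in> C" "c2 \<in> C" for c1 c2
    using component_walk[OF sym c0W] that by (simp add: C_def)
  have "is_clique V E N"
    unfolding is_clique_def
  proof (intro conjI ballI impI)
    show "N \<subseteq> V" by (auto simp: N_def)
    fix x y assume xy: "x \<in> N" "y \<in> N" "x \<noteq> y"
    obtain cx where cx: "cx \<in> C" "E cx x" "x \<notin> C" using xy(1) by (auto simp: N_def)
    obtain cy where cy: "cy \<in> C" "E cy y" "y \<notin> C" using xy(2) by (auto simp: N_def)
    show "E x y"
      using component_neighbours_adjacent[OF s ch u _ C_avoid C_conn N_nbr[OF xy(1)] cx(3,1)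
          sym[OF cx(2)] N_nbr[OF xy(2)] cy(3,1,2) xy(3)] CW
      by (auto simp: W_def)
  qed
  moreover have "nbr E v \<subseteq> C \<union> N" if "v \<in> C" for v
    using that inV by (auto simp: nbr_def N_def)
  moreover have "C \<inter> insert u (nbr E u) = {}" "C \<union> N \<subseteq> V" "C \<inter> N = {}"
    using CW by (auto simp: W_def N_def)
  moreover have "N \<subseteq> nbr E u" using N_nbr by (auto simp: nbr_def)
  ultimately show ?thesis using that c0C by blast
qed

lemma simplicial_induced_lift:
  assumes W: "W \<subseteq> V" and v: "simplicial W (induced E W) v" and nbr_v: "nbr E v \<subseteq> W"
  shows "simplicial V E v"
proof -
  have "nbr (induced E W) v = nbr E v" using v nbr_v by (auto simp: simplicial_def nbr_def induced_def)
  then show ?thesis using v W by (auto simp: simplicial_def clique_induced_iff)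
qed

lemma simplicial_dominating_lift:
  assumes s: "simple_graph V E" and dom: "V = insert u (nbr E u)"
    and v: "simplicial (V - {u}) (induced E (V - {u})) v"
  shows "simplicial V E v"
proof -
  have sym: "\<And>a b. E a b \<Longrightarrow> E b a" by (rule simple_graph_sym[OF s])
  have inV: "\<And>a b. E a b \<Longrightarrow> a \<in> V \<and> b \<in> V" by (rule simple_graph_edge[OF s])
  have vV: "v \<in> V" "v \<noteq> u" using v by (auto simp: simplicial_def)
  have Eu: "E u z" if "z \<in> V" "z \<noteq> u" for z using dom that by (auto simp: nbr_def)
  have nbr_v: "nbr E v = insert u (nbr (induced E (V - {u})) v)"
  proof
    show "nbr E v \<subseteq> insert u (nbr (induced E (V - {u})) v)"
      using vV inV by (auto simp: nbr_def induced_def)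
    have "E v u" using sym[OF Eu[OF vV]] .
    then show "insert u (nbr (induced E (V - {u})) v) \<subseteq> nbr E v"
      unfolding nbr_def induced_def by blast
  qed
  have "is_clique V E (nbr E v)"
    unfolding is_clique_def
  proof (intro conjI ballI impI)
    show "nbr E v \<subseteq> V" using inV by (auto simp: nbr_def)
    fix a b assume ab: "a \<in> nbr E v" "b \<in> nbr E v" "a \<noteq> b"
    show "E a b"
    proof (cases "a = u \<or> b = u")
      case True
      moreover have "a \<in> V" "b \<in> V" using ab inV by (auto simp: nbr_def)
      ultimately show ?thesis using ab(3) Eu sym by blast
    next
      case False
      then have "a \<in> nbr (induced E (V - {u})) v" "b \<in> nbr (induced E (V - {u})) v"
        using ab nbr_v by blast+
      moreover have "is_clique (V - {u}) (induced E (V - {u})) (nbr (induced E (V - {u})) v)"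
        using v by (simp add: simplicial_def)
      ultimately have "induced E (V - {u}) a b" using ab(3) unfolding is_clique_def by blast
      then show ?thesis by (simp add: induced_def)
    qed
  qed
  then show ?thesis using vV by (simp add: simplicial_def)
qed

lemma simplicial_outside_clique:
  "simple_graph V E \<Longrightarrow> chordal V E \<Longrightarrow> is_clique V E K \<Longrightarrow> K \<noteq> V \<Longrightarrow> \<exists>v\<in>V - K. simplicial V E v"
proof (induction "card V" arbitrary: V E K rule: less_induct)
  case less
  note s = less.prems(1) and ch = less.prems(2) and K = less.prems(3) and KV = less.prems(4)
  have irr: "\<And>a. \<not> E a a" by (rule simple_graph_irrefl[OF s])
  have inV: "\<And>a b. E a b \<Longrightarrow> a \<in> V \<and> b \<in> V" by (rule simple_graph_edge[OF s])
  have fV: "finite V" by (rule simple_graph_finite[OF s])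
  have KsV: "K \<subseteq> V" using K by (simp add: is_clique_def)
  obtain u where u: "u \<in> V" "K \<subseteq> insert u (nbr E u)" "K = {} \<or> u \<in> K"
  proof (cases "K = {}")
    case True
    then show ?thesis using that KV by blast
  next
    case False
    then obtain w where "w \<in> K" by blast
    moreover have "K \<subseteq> insert w (nbr E w)" using K \<open>w \<in> K\<close> by (auto simp: is_clique_def nbr_def)
    ultimately show ?thesis using that[of w] KsV by blast
  qed
  show ?case
  proof (cases "V = {u}")
    case True
    then have "nbr E u = {}" using inV irr by (auto simp: nbr_def)
    then show ?thesis using True KV KsV by (auto simp: simplicial_def is_clique_def)
  next
    case not_single: False
    show ?thesis
    proof (cases "V = insert u (nbr E u)")
      case True
      let ?V = "V - {u}" and ?E = "induced E (V - {u})"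
      have "card ?V < card V" using fV u(1) by (rule card_Diff1_less)
      moreover have "simple_graph ?V ?E" "chordal ?V ?E"
        using simple_graph_induced[OF s] chordal_induced[OF ch] by auto
      moreover have "is_clique ?V ?E (K - {u})" using K unfolding is_clique_def induced_def by blast
      moreover have "K - {u} \<noteq> ?V" using u(1,3) KV KsV not_single by auto
      ultimately obtain v where "v \<in> ?V - (K - {u})" "simplicial ?V ?E v"
        using less.hyps by blast
      then show ?thesis using simplicial_dominating_lift[OF s True] by auto
    next
      case False
      then obtain c0 where c0: "c0 \<in> V" "c0 \<noteq> u" "\<not> E u c0"
        using u(1) inV by (auto simp: nbr_def)
      obtain C N where CN: "c0 \<in> C" "C \<inter> insert u (nbr E u) = {}" "N \<subseteq> nbr E u" "C \<union> N \<subseteq> V"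
          "C \<inter> N = {}" "is_clique V E N" "\<And>v. v \<in> C \<Longrightarrow> nbr E v \<subseteq> C \<union> N"
        using component_with_clique_boundary[OF s ch u(1) c0] by blast
      have "u \<notin> C \<union> N" using CN(2,3) irr by (auto simp: nbr_def)
      then have "C \<union> N \<subset> V" using CN(4) u(1) by blast
      then have "card (C \<union> N) < card V" by (rule psubset_card_mono[OF fV])
      moreover have "is_clique (C \<union> N) (induced E (C \<union> N)) N" "N \<noteq> C \<union> N"
        using CN(1,4,5,6) by (auto simp: clique_induced_iff)
      moreover have "simple_graph (C \<union> N) (induced E (C \<union> N))" "chordal (C \<union> N) (induced E (C \<union> N))"
        using simple_graph_induced[OF s CN(4)] chordal_induced[OF ch CN(4)] .
      ultimately obtain v where v: "v \<in> (C \<union> N) - N" "simplicial (C \<union> N) (induced E (C \<union> N)) v"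
        using less.hyps by blast
      then have "simplicial V E v" using simplicial_induced_lift[OF CN(4)] CN(7) by auto
      moreover have "v \<notin> K" using v(1) CN(2) u(2) by auto
      ultimately show ?thesis using v(1) CN(4) by auto
    qed
  qed
qed

lemma connected_on_induced: "connected_on W E \<Longrightarrow> W \<subseteq> X \<Longrightarrow> connected_on W (induced E X)"
  unfolding connected_on_walk using walk_induced by metis

text \<open>Deleting a vertex whose neighbourhood is a clique does not disconnect a graph: an
  induced walk between two other vertices cannot pass through it.\<close>
lemma connected_on_remove_simplicial:
  assumes conn: "connected_on U E" and sym: "\<And>a b. E a b \<Longrightarrow> E b a"
    and nbr_clique: "\<And>a b. E v a \<Longrightarrow> E v b \<Longrightarrow> a \<noteq> b \<Longrightarrow> E a b"
  shows "connected_on (U - {v}) E"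
  unfolding connected_on_walk
proof (intro ballI)
  fix a b assume ab: "a \<in> U - {v}" "b \<in> U - {v}"
  then obtain p where "walk E U p a b" using conn unfolding connected_on_walk by blast
  then obtain q where q: "walk E U q a b" "distinct q"
    and no_chord: "\<And>i j. Suc i < j \<Longrightarrow> j < length q \<Longrightarrow> \<not> E (q ! i) (q ! j)"
    by (rule induced_walk) blast
  have "v \<notin> set q"
  proof
    assume "v \<in> set q"
    then obtain i where i: "i < length q" "q ! i = v" unfolding in_set_conv_nth by blast
    have q0: "q ! 0 = a" and ql: "q ! (length q - 1) = b" and path: "successively E q"
      using q by (auto simp: walk_def hd_conv_nth last_conv_nth)
    have i0: "i \<noteq> 0"
    proof
      assume "i = 0"
      then show False using i(2) q0 ab(1) by simp
    qed
    have il: "i \<noteq> length q - 1"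
    proof
      assume "i = length q - 1"
      then show False using i(2) ql ab(2) by simp
    qed
    have "E (q ! (i - 1)) v" using successively_nth[OF path, of "i - 1"] i i0 by simp
    then have "E v (q ! (i - 1))" by (rule sym)
    moreover have "E v (q ! (i + 1))" using successively_nth[OF path, of i] i il by simp
    moreover have "q ! (i - 1) \<noteq> q ! (i + 1)"
      using q(2) i i0 il by (subst nth_eq_iff_index_eq) auto
    ultimately have "E (q ! (i - 1)) (q ! (i + 1))" by (rule nbr_clique)
    moreover have "\<not> E (q ! (i - 1)) (q ! (i + 1))" using no_chord[of "i - 1" "i + 1"] i i0 il by simp
    ultimately show False by contradiction
  qed
  then have "walk E (U - {v}) q a b" using q(1) by (auto simp: walk_def)
  then show "\<exists>p. walk E (U - {v}) p a b" by blast
qed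

text \<open>In a k-connected graph every vertex that is not adjacent to all other vertices has
  degree at least k, since its neighbourhood separates it from a non-neighbour.\<close>
lemma degree_ge_connectivity:
  assumes s: "simple_graph V E" and kc: "k_connected k V E" and v: "v \<in> V"
    and w: "w \<in> V" "w \<noteq> v" "\<not> E v w"
  shows "k \<le> card (nbr E v)"
proof (rule ccontr)
  have inV: "\<And>a b. E a b \<Longrightarrow> b \<in> V" using simple_graph_edge[OF s] by blast
  have irr: "\<not> E v v" by (rule simple_graph_irrefl[OF s])
  assume "\<not> k \<le> card (nbr E v)"
  moreover have "nbr E v \<subseteq> V" using inV by (auto simp: nbr_def)
  ultimately have "connected_on (V - nbr E v) E" using kc unfolding k_connected_def by simp
  moreover have "v \<in> V - nbr E v" "w \<in> V - nbr E v" using v w irr by (simp_all add: nbr_def)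
  ultimately obtain p where p: "walk E (V - nbr E v) p v w" unfolding connected_on_walk by blast
  then obtain p' where p': "p = v # p'" by (cases p) (auto simp: walk_def)
  then have "p' \<noteq> []" using p w(2) by (auto simp: walk_def)
  then have "E v (hd p')" and "hd p' \<in> set p"
    using p p' by (auto simp: walk_def successively_Cons)
  then show False using p by (auto simp: walk_def nbr_def)
qed

lemma k_connected_remove_simplicial:
  assumes s: "simple_graph V E" and kc: "k_connected k V E" and v: "simplicial V E v"
    and deg: "k \<le> card (nbr E v)"
  shows "k_connected k (V - {v}) (induced E (V - {v}))"
  unfolding k_connected_def
proof (intro conjI allI impI)
  have fV: "finite V" by (rule simple_graph_finite[OF s])
  have sym: "\<And>a b. E a b \<Longrightarrow> E b a" by (rule simple_graph_sym[OF s])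
  have irr: "\<not> E v v" by (rule simple_graph_irrefl[OF s])
  have "nbr E v \<subseteq> V - {v}" using v irr by (auto simp: simplicial_def is_clique_def nbr_def)
  then have "card (nbr E v) \<le> card (V - {v})" using fV by (intro card_mono) auto
  then show "k \<le> card (V - {v})" using deg by simp
  fix S assume S: "S \<subseteq> V - {v} \<and> card S < k"
  then have conn: "connected_on (V - S) E" using kc unfolding k_connected_def by blast
  have nbr_clique: "\<And>a b. E v a \<Longrightarrow> E v b \<Longrightarrow> a \<noteq> b \<Longrightarrow> E a b"
    using v by (auto simp: simplicial_def is_clique_def nbr_def)
  have "connected_on (V - S - {v}) E"
    by (rule connected_on_remove_simplicial[OF conn sym nbr_clique])
  moreover have "V - S - {v} = V - {v} - S" by blast
  ultimately have "connected_on (V - {v} - S) E" by simp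
  then show "connected_on (V - {v} - S) (induced E (V - {v}))"
    by (rule connected_on_induced) blast
qed

text \<open>A vertex outside a maximum clique misses some other vertex, as otherwise it would
  extend the clique.\<close>
lemma non_neighbour_outside_maximum_clique:
  assumes s: "simple_graph V E" and K: "is_clique V E K"
    and max: "\<forall>K'. is_clique V E K' \<longrightarrow> card K' \<le> card K" and v: "v \<in> V - K"
  shows "\<exists>w\<in>V. w \<noteq> v \<and> \<not> E v w"
proof (rule ccontr)
  assume "\<not> ?thesis"
  then have adj: "\<And>w. w \<in> V \<Longrightarrow> w \<noteq> v \<Longrightarrow> E v w" by blast
  have KV: "K \<subseteq> V" using K by (simp add: is_clique_def)
  have "is_clique V E (insert v K)"
    unfolding is_clique_def
  proof (intro conjI ballI impI)
    show "insert v K \<subseteq> V" using KV v by blast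
    fix a b assume "a \<in> insert v K" "b \<in> insert v K" "a \<noteq> b"
    then show "E a b" using K KV adj simple_graph_sym[OF s, OF adj] unfolding is_clique_def by blast
  qed
  then have "card (insert v K) \<le> card K" using max by blast
  moreover have "finite K" using KV simple_graph_finite[OF s] by (rule finite_subset)
  ultimately show False using v by simp
qed

lemma sum_fun_upd_remove:
  assumes "finite A" and "v \<in> A"
  shows "(\<Sum>x\<in>A. g ((f(v := n)) x)) = g n + (\<Sum>x\<in>A - {v}. (g (f x) :: 'b::comm_monoid_add))"
proof -
  have "(\<Sum>x\<in>A. g ((f(v := n)) x)) = g n + (\<Sum>x\<in>A - {v}. g ((f(v := n)) x))"
    using assms by (simp add: sum.remove)
  also have "(\<Sum>x\<in>A - {v}. g ((f(v := n)) x)) = (\<Sum>x\<in>A - {v}. g (f x))"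
    by (rule sum.cong) auto
  finally show ?thesis .
qed

text \<open>Peeling off simplicial vertices outside a maximum clique K (a perfect elimination
  ordering) shows that the clique polynomial of a k-connected chordal graph is that of K plus
  one monomial x^deg(v) per further vertex v, each of degree at least k.\<close>
lemma clique_poly_elimination:
  "simple_graph V E \<Longrightarrow> chordal V E \<Longrightarrow> k_connected k V E \<Longrightarrow> is_clique V E K \<Longrightarrow>
   (\<forall>K'. is_clique V E K' \<longrightarrow> card K' \<le> card K) \<Longrightarrow>
   \<exists>deg. clique_poly V E = clique_poly K (induced E K) + (\<Sum>v\<in>V - K. monom 1 (deg v))
     \<and> (\<forall>v\<in>V - K. k \<le> deg v) \<and> k \<le> card K"
proof (induction "card (V - K)" arbitrary: V E rule: less_induct)
  case less
  note s = less.prems(1) and ch = less.prems(2) and kc = less.prems(3) and K = less.prems(4)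
    and max = less.prems(5)
  have fV: "finite V" by (rule simple_graph_finite[OF s])
  have KV: "K \<subseteq> V" using K by (simp add: is_clique_def)
  show ?case
  proof (cases "K = V")
    case True
    have "k \<le> card K" using kc True by (simp add: k_connected_def)
    then show ?thesis using True by (simp add: clique_poly_def cliques_induced_self)
  next
    case False
    then obtain v where v: "v \<in> V - K" "simplicial V E v"
      using simplicial_outside_clique[OF s ch K] by blast
    have "\<exists>w\<in>V. w \<noteq> v \<and> \<not> E v w"
      using non_neighbour_outside_maximum_clique[OF s K max] v(1) by blast
    then have deg: "k \<le> card (nbr E v)" using degree_ge_connectivity[OF s kc] v(1) by blast
    let ?V = "V - {v}" and ?E = "induced E (V - {v})"
    have "?V - K = (V - K) - {v}" by blast
    moreover have "card ((V - K) - {v}) < card (V - K)" using fV v(1) by (intro card_Diff1_less) auto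
    ultimately have "card (?V - K) < card (V - K)" by simp
    moreover have "simple_graph ?V ?E" "chordal ?V ?E" "k_connected k ?V ?E"
      using simple_graph_induced[OF s] chordal_induced[OF ch] k_connected_remove_simplicial[OF s kc v(2) deg]
      by auto
    moreover have "K \<subseteq> ?V" using KV v(1) by blast
    then have "is_clique ?V ?E K" using K clique_induced_iff[of ?V V E K] by blast
    moreover have "\<forall>K'. is_clique ?V ?E K' \<longrightarrow> card K' \<le> card K"
      using max clique_induced_iff[of ?V V E] by blast
    ultimately obtain deg0 where deg0:
      "clique_poly ?V ?E = clique_poly K (induced ?E K) + (\<Sum>x\<in>?V - K. monom 1 (deg0 x))"
      "\<forall>x\<in>?V - K. k \<le> deg0 x" "k \<le> card K"
      using less.hyps by blast
    define deg1 where "deg1 = deg0(v := card (nbr E v))"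
    have sum_deg1: "(\<Sum>x\<in>V - K. monom 1 (deg1 x))
        = monom 1 (card (nbr E v)) + (\<Sum>x\<in>?V - K. monom 1 (deg0 x))"
      using sum_fun_upd_remove[of "V - K" v "\<lambda>n. monom 1 n"] fV v(1) \<open>?V - K = (V - K) - {v}\<close>
      by (simp add: deg1_def)
    have "induced ?E K = induced E K" using KV v(1) by (intro induced_induced) auto
    have "clique_poly V E = clique_poly ?V ?E + monom 1 (card (nbr E v))"
      by (rule clique_poly_remove_simplicial[OF s v(2)])
    also have "\<dots> = clique_poly K (induced E K)
        + (monom 1 (card (nbr E v)) + (\<Sum>x\<in>?V - K. monom 1 (deg0 x)))"
      using deg0(1) \<open>induced ?E K = induced E K\<close> by (simp add: algebra_simps)
    also have "\<dots> = clique_poly K (induced E K) + (\<Sum>x\<in>V - K. monom 1 (deg1 x))"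
      by (simp only: sum_deg1)
    finally have "clique_poly V E = clique_poly K (induced E K) + (\<Sum>x\<in>V - K. monom 1 (deg1 x))" .
    moreover have "\<forall>x\<in>V - K. k \<le> deg1 x" using deg0(2) deg by (auto simp: deg1_def)
    ultimately show ?thesis using deg0(3) by blast
  qed
qed

lemma coeff_sum_monom:
  "finite A \<Longrightarrow> coeff (\<Sum>x\<in>A. monom (1::int) (f x)) m = int (card {x \<in> A. f x = m})"
  by (simp add: coeff_sum coeff_monom sum.If_cases) (simp add: Int_def)

text \<open>Necessity: the coefficients b_j count the vertices of a maximum clique of size d
  (one for each j < d) plus the peeled vertices of degree j (none for j < k).\<close>
lemma clique_vector_necessary:
  assumes s: "simple_graph V E" and kc: "k_connected k V E" and ch: "chordal V E"
    and c: "clique_vector V E = c" "length c = d"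
  shows "(\<forall>j\<in>{1..d}. coeff (b_poly c) (j - 1) > 0) \<and> d \<ge> k
    \<and> (\<forall>j\<in>{1..k}. coeff (b_poly c) (j - 1) = 1)"
proof -
  obtain K where K: "is_clique V E K" "card K = clique_number V E"
    using clique_number_attained[OF s] by blast
  have "length (clique_vector V E) = clique_number V E" by (simp add: clique_vector_def)
  then have cK: "card K = d" using K(2) c by simp
  have max: "\<forall>K'. is_clique V E K' \<longrightarrow> card K' \<le> card K" using clique_card_le[OF s] K(2) by simp
  obtain deg where deg: "clique_poly V E = clique_poly K (induced E K) + (\<Sum>v\<in>V - K. monom 1 (deg v))"
      "\<forall>v\<in>V - K. k \<le> deg v" "k \<le> card K"
    using clique_poly_elimination[OF s ch kc K(1) max] by blast
  have "clique_poly K (induced E K) = (\<Sum>j<card K. monom 1 j)"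
    by (rule clique_poly_of_clique[OF s K(1)])
  also have "\<dots> = (\<Sum>j\<in>{..<d}. monom 1 (id j))" using cK by simp
  finally have coeff_b: "coeff (b_poly c) m = int (card {j \<in> {..<d}. j = m}) + int (card {v \<in> V - K. deg v = m})"
    for m
    using b_poly_clique_vector[OF s] c(1) deg(1) simple_graph_finite[OF s]
    by (simp only: coeff_add coeff_sum_monom finite_lessThan finite_Diff id_apply)
  have "{j \<in> {..<d}. j = m} = (if m < d then {m} else {})" for m by auto
  then have coeff_b': "coeff (b_poly c) m = (if m < d then 1 else 0) + int (card {v \<in> V - K. deg v = m})"
    for m using coeff_b[of m] by simp
  have low: "{v \<in> V - K. deg v = m} = {}" if "m < k" for m using deg(2) that by force
  show ?thesis
  proof (intro conjI ballI)
    fix j assume "j \<in> {1..d}"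
    then have "j - 1 < d" by auto
    then show "coeff (b_poly c) (j - 1) > 0" using coeff_b'[of "j - 1"] by simp
  next
    show "k \<le> d" using deg(3) cK by simp
  next
    fix j assume "j \<in> {1..k}"
    then have "j - 1 < k" "j - 1 < d" using deg(3) cK by auto
    moreover from this(1) have "card {v \<in> V - K. deg v = j - 1} = 0"
      by (simp only: low card.empty)
    ultimately show "coeff (b_poly c) (j - 1) = 1" using coeff_b'[of "j - 1"] by simp
  qed
qed

text \<open>Split graphs: a clique K together with vertices whose neighbourhoods lie inside K.
  Each outer vertex is simplicial, so the clique polynomial is read off the degrees.\<close>
lemma clique_poly_split:
  "simple_graph V E \<Longrightarrow> is_clique V E K \<Longrightarrow> (\<forall>x\<in>V - K. nbr E x \<subseteq> K) \<Longrightarrow>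
   clique_poly V E = clique_poly K (induced E K) + (\<Sum>x\<in>V - K. monom 1 (card (nbr E x)))"
proof (induction "card (V - K)" arbitrary: V E rule: less_induct)
  case less
  note s = less.prems(1) and K = less.prems(2) and outer = less.prems(3)
  have fV: "finite V" by (rule simple_graph_finite[OF s])
  have KV: "K \<subseteq> V" using K by (simp add: is_clique_def)
  show ?case
  proof (cases "K = V")
    case True
    then show ?thesis by (simp add: clique_poly_def cliques_induced_self)
  next
    case False
    then obtain v where v: "v \<in> V" "v \<notin> K" using KV by blast
    have sv: "simplicial V E v" using K outer v unfolding simplicial_def is_clique_def by blast
    let ?V = "V - {v}" and ?E = "induced E (V - {v})"
    have nbr_eq: "nbr ?E x = nbr E x" if "x \<in> ?V - K" for x
      using that outer KV v(2) unfolding nbr_def induced_def by blast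
    have "?V - K = (V - K) - {v}" by blast
    moreover have "card ((V - K) - {v}) < card (V - K)" using fV v by (intro card_Diff1_less) auto
    ultimately have "card (?V - K) < card (V - K)" by simp
    moreover have "simple_graph ?V ?E" using simple_graph_induced[OF s] by blast
    moreover have "is_clique ?V ?E K" using K v KV clique_induced_iff[of ?V V E K] by blast
    moreover have "\<forall>x\<in>?V - K. nbr ?E x \<subseteq> K" using nbr_eq outer by auto
    ultimately have IH: "clique_poly ?V ?E = clique_poly K (induced ?E K) + (\<Sum>x\<in>?V - K. monom 1 (card (nbr ?E x)))"
      using less.hyps by blast
    have "induced ?E K = induced E K" using KV v by (intro induced_induced) auto
    moreover have "(\<Sum>x\<in>?V - K. monom (1::int) (card (nbr ?E x))) = (\<Sum>x\<in>?V - K. monom 1 (card (nbr E x)))"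
      by (rule sum.cong) (simp_all add: nbr_eq)
    moreover have "(\<Sum>x\<in>V - K. monom (1::int) (card (nbr E x)))
        = monom 1 (card (nbr E v)) + (\<Sum>x\<in>?V - K. monom 1 (card (nbr E x)))"
      using v fV \<open>?V - K = (V - K) - {v}\<close> by (simp add: sum.remove)
    ultimately show ?thesis
      using IH clique_poly_remove_simplicial[OF s sv] by (simp add: algebra_simps)
  qed
qed

text \<open>The two cycle neighbours of position i on a cycle of length n \<ge> 4 are not cyclically
  consecutive, so an edge between them is a chord.\<close>
lemma cycle_neighbours_chord:
  assumes n: "4 \<le> (n::nat)" and i: "i < n"
  obtains a b where "a < n" "b < n" "(a + 1) mod n = i" "b = (i + 1) mod n"
    "b \<noteq> (a + 1) mod n" "a \<noteq> (b + 1) mod n" "a \<noteq> b"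
proof (cases "i = 0")
  case True
  have "(n - 1 + 1) mod n = 0" "(1 + 1) mod n = 2" using n by simp_all
  then show ?thesis using True n by (intro that[of "n - 1" 1]) auto
next
  case i0: False
  show ?thesis
  proof (cases "i = n - 1")
    case True
    have "(n - 2 + 1) mod n = n - 1" "(i + 1) mod n = 0" using True n by simp_all
    then show ?thesis using True n by (intro that[of "n - 2" 0]) auto
  next
    case False
    have "(i - 1 + 1) mod n = i" "(i + 1) mod n = i + 1" using i i0 False by simp_all
    moreover have "i - 1 \<noteq> (i + 1 + 1) mod n"
    proof (cases "i + 2 < n")
      case True
      then show ?thesis by simp
    next
      case last: False
      then have "i + 2 = n" using i \<open>i \<noteq> n - 1\<close> by simp
      then show ?thesis using n by simp
    qed
    ultimately show ?thesis using i i0 False by (intro that[of "i - 1" "i + 1"]) auto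
  qed
qed

text \<open>Split graphs are chordal: a long cycle through an outer vertex has a chord between the
  two (clique) neighbours of that vertex, and a long cycle inside K has every chord.\<close>
lemma chordal_split:
  assumes s: "simple_graph V E" and K: "is_clique V E K" and outer: "\<forall>x\<in>V - K. nbr E x \<subseteq> K"
  shows "chordal V E"
  unfolding chordal_def
proof (intro allI impI)
  fix cs assume cs: "distinct cs \<and> set cs \<subseteq> V \<and> 4 \<le> length cs
      \<and> (\<forall>i<length cs. E (cs ! i) (cs ! ((i + 1) mod length cs)))"
  let ?n = "length cs"
  have dist: "distinct cs" and n4: "4 \<le> ?n" and csV: "\<And>i. i < ?n \<Longrightarrow> cs ! i \<in> V"
    and step: "\<And>i. i < ?n \<Longrightarrow> E (cs ! i) (cs ! ((i + 1) mod ?n))"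
    using cs nth_mem by auto
  have Kadj: "E x y" if "x \<in> K" "y \<in> K" "x \<noteq> y" for x y using K that by (simp add: is_clique_def)
  show "\<exists>i<?n. \<exists>j<?n. E (cs ! i) (cs ! j) \<and> j \<noteq> (i + 1) mod ?n \<and> i \<noteq> (j + 1) mod ?n \<and> i \<noteq> j"
  proof (cases "\<exists>i<?n. cs ! i \<notin> K")
    case True
    then obtain i where i: "i < ?n" "cs ! i \<notin> K" by blast
    obtain a b where ab: "a < ?n" "b < ?n" "(a + 1) mod ?n = i" "b = (i + 1) mod ?n"
        "b \<noteq> (a + 1) mod ?n" "a \<noteq> (b + 1) mod ?n" "a \<noteq> b"
      using cycle_neighbours_chord[OF n4 i(1)] by blast
    have "E (cs ! a) (cs ! i)" using step[OF ab(1)] ab(3) by simp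
    then have "E (cs ! i) (cs ! a)" by (rule simple_graph_sym[OF s])
    moreover have "E (cs ! i) (cs ! b)" using step[OF i(1)] ab(4) by simp
    ultimately have "cs ! a \<in> K" "cs ! b \<in> K"
      using outer csV[OF i(1)] i(2) by (auto simp: nbr_def)
    moreover have "cs ! a \<noteq> cs ! b" using dist ab(1,2,7) by (simp add: nth_eq_iff_index_eq)
    ultimately have "E (cs ! a) (cs ! b)" by (rule Kadj)
    then show ?thesis using ab by blast
  next
    case False
    moreover have "0 < ?n" "2 < ?n" using n4 by auto
    ultimately have "cs ! 0 \<in> K" "cs ! 2 \<in> K" by auto
    moreover have "cs ! 0 \<noteq> cs ! 2" using dist n4 by (subst nth_eq_iff_index_eq) auto
    ultimately have "E (cs ! 0) (cs ! 2)" by (rule Kadj)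
    moreover have "(0 + 1) mod ?n = 1" "(2 + 1) mod ?n = 3" using n4 by auto
    ultimately show ?thesis using n4 by (intro exI[of _ 0] conjI exI[of _ 2]) auto
  qed
qed

text \<open>A split graph is k-connected as soon as K and every outer neighbourhood have at least
  k vertices: after deleting fewer than k vertices, each remaining vertex still reaches a
  surviving vertex of K.\<close>
lemma k_connected_split:
  assumes s: "simple_graph V E" and K: "is_clique V E K" and outer: "\<forall>x\<in>V - K. nbr E x \<subseteq> K"
    and kK: "k \<le> card K" and deg: "\<forall>x\<in>V - K. k \<le> card (nbr E x)"
  shows "k_connected k V E"
  unfolding k_connected_def
proof (intro conjI allI impI)
  have fV: "finite V" by (rule simple_graph_finite[OF s])
  have KV: "K \<subseteq> V" using K by (simp add: is_clique_def)
  show "k \<le> card V" using kK card_mono[OF fV KV] by simp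
  fix S assume S: "S \<subseteq> V \<and> card S < k"
  let ?R = "induced E (V - S)"
  have fS: "finite S" using S fV finite_subset by blast
  have survivor: "\<exists>y\<in>A - S. y \<in> K" if "A \<subseteq> K" "k \<le> card A" for A
  proof (rule ccontr)
    assume "\<not> ?thesis"
    then have "A \<subseteq> S" using that(1) by blast
    then have "card A \<le> card S" by (rule card_mono[OF fS])
    then show False using that(2) S by linarith
  qed
  obtain z0 where z0: "z0 \<in> K" "z0 \<notin> S" using survivor[OF order_refl kK] by blast
  have Kadj: "E x y" if "x \<in> K" "y \<in> K" "x \<noteq> y" for x y using K that by (simp add: is_clique_def)
  have K_hub: "?R\<^sup>*\<^sup>* z0 y \<and> ?R\<^sup>*\<^sup>* y z0" if "y \<in> K" "y \<notin> S" for y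
  proof (cases "y = z0")
    case False
    then have "?R z0 y" "?R y z0" using that z0 KV Kadj by (auto simp: induced_def)
    then show ?thesis by auto
  qed simp
  have hub: "?R\<^sup>*\<^sup>* z0 w \<and> ?R\<^sup>*\<^sup>* w z0" if w: "w \<in> V - S" for w
  proof (cases "w \<in> K")
    case True
    then show ?thesis using K_hub w by blast
  next
    case False
    then have "nbr E w \<subseteq> K" "k \<le> card (nbr E w)" using outer deg w by blast+
    then obtain y where y: "y \<in> nbr E w - S" "y \<in> K" using survivor by blast
    then have "E w y" by (simp add: nbr_def)
    then have "?R y w" "?R w y" using w y KV simple_graph_sym[OF s, of w y] by (auto simp: induced_def)
    moreover have "?R\<^sup>*\<^sup>* z0 y \<and> ?R\<^sup>*\<^sup>* y z0" using K_hub y by blast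
    ultimately show ?thesis by (meson rtranclp.rtrancl_into_rtrancl converse_rtranclp_into_rtranclp)
  qed
  show "connected_on (V - S) E"
    unfolding connected_on_walk
  proof (intro ballI)
    fix u v assume uv: "u \<in> V - S" "v \<in> V - S"
    have "?R\<^sup>*\<^sup>* u v" using hub[OF uv(1)] hub[OF uv(2)] by (meson rtranclp_trans)
    then show "\<exists>p. walk E (V - S) p u v" using walk_of_rtranclp uv(1) by fast
  qed
qed

lemma clique_number_split:
  assumes s: "simple_graph V E" and K: "is_clique V E K" and outer: "\<forall>x\<in>V - K. nbr E x \<subseteq> K"
    and small: "\<forall>x\<in>V - K. card (nbr E x) < card K"
  shows "clique_number V E = card K"
proof -
  have fV: "finite V" by (rule simple_graph_finite[OF s])
  have KV: "K \<subseteq> V" using K by (simp add: is_clique_def)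
  have "card T \<le> card K" if T: "is_clique V E T" for T
  proof (cases "T \<subseteq> K")
    case True
    then show ?thesis using card_mono[OF finite_subset[OF KV fV]] by blast
  next
    case False
    then obtain x where x: "x \<in> T" "x \<notin> K" by blast
    have TV: "T \<subseteq> V" using T by (simp add: is_clique_def)
    have "x \<in> V - K" using x TV by blast
    then have "nbr E x \<subseteq> K" "card (nbr E x) < card K" using outer small by blast+
    then have fN: "finite (nbr E x)" using finite_subset[OF KV fV] finite_subset by blast
    have "T - {x} \<subseteq> nbr E x" using T x(1) by (auto simp: is_clique_def nbr_def)
    then have "card (T - {x}) \<le> card (nbr E x)" by (rule card_mono[OF fN])
    moreover have "card (T - {x}) = card T - 1" using x(1) by (rule card_Diff_singleton)
    moreover have "card T \<ge> 1" using x(1) finite_subset[OF TV fV] by (auto simp: Suc_le_eq card_gt_0_iff)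
    ultimately show ?thesis using \<open>card (nbr E x) < card K\<close> by linarith
  qed
  moreover obtain T where "is_clique V E T" "card T = clique_number V E"
    using clique_number_attained[OF s] by blast
  ultimately show ?thesis using clique_card_le[OF s K] by fastforce
qed

text \<open>The extremal graphs: a clique on 0..d-1 and, for every entry l of the list L, one
  further vertex joined to the first l clique vertices.\<close>
definition pendant_edge :: "nat \<Rightarrow> nat list \<Rightarrow> nat \<Rightarrow> nat \<Rightarrow> bool" where
  "pendant_edge d L a b \<longleftrightarrow> (a < d \<and> b < d \<and> a \<noteq> b)
     \<or> (d \<le> a \<and> a < d + length L \<and> b < L ! (a - d))
     \<or> (d \<le> b \<and> b < d + length L \<and> a < L ! (b - d))"

lemma pendant_graph:
  assumes L: "\<forall>l\<in>set L. l < d"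
  shows pendant_simple: "simple_graph {0..<d + length L} (pendant_edge d L)"
    and pendant_clique: "is_clique {0..<d + length L} (pendant_edge d L) {0..<d}"
    and pendant_nbr: "x \<in> {0..<d + length L} - {0..<d} \<Longrightarrow> nbr (pendant_edge d L) x = {0..<L ! (x - d)}"
proof -
  have Lx: "L ! (x - d) < d" if "d \<le> x" "x < d + length L" for x
    using L that by (simp add: less_diff_conv2)
  show "simple_graph {0..<d + length L} (pendant_edge d L)"
    unfolding simple_graph_def pendant_edge_def using Lx by (fastforce simp: less_diff_conv2)
  show "is_clique {0..<d + length L} (pendant_edge d L) {0..<d}"
    by (auto simp: is_clique_def pendant_edge_def)
  show "nbr (pendant_edge d L) x = {0..<L ! (x - d)}" if "x \<in> {0..<d + length L} - {0..<d}"
    using that Lx by (force simp: nbr_def pendant_edge_def)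
qed

lemma pendant_graph_properties:
  assumes L_range: "\<forall>l\<in>set L. k \<le> l \<and> l < d" and kd: "k \<le> d"
  defines "V \<equiv> {0..<d + length L}" and "E \<equiv> pendant_edge d L"
  shows "simple_graph V E" "k_connected k V E" "chordal V E" "clique_number V E = d"
    "clique_poly V E = (\<Sum>j<d. monom 1 j) + sum_list (map (monom 1) L)"
proof -
  have L_lt: "\<forall>l\<in>set L. l < d" using L_range by blast
  note s = pendant_simple[OF L_lt, folded V_def E_def]
    and K = pendant_clique[OF L_lt, folded V_def E_def]
    and nbrE = pendant_nbr[OF L_lt, folded V_def E_def]
  have VK: "V - {0..<d} = {d..<d + length L}" by (auto simp: V_def)
  have nbr_L: "nbr E x = {0..<L ! (x - d)}" "L ! (x - d) \<in> set L" if "x \<in> V - {0..<d}" for x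
    using nbrE[OF that] that by (auto simp: VK)
  have outer: "\<forall>x\<in>V - {0..<d}. nbr E x \<subseteq> {0..<d}" using nbr_L L_lt by fastforce
  show "simple_graph V E" by (rule s)
  show "k_connected k V E"
    using L_range nbr_L kd by (intro k_connected_split[OF s K outer]) auto
  show "chordal V E" by (rule chordal_split[OF s K outer])
  show "clique_number V E = d"
    using clique_number_split[OF s K outer] nbr_L L_lt by fastforce
  have "clique_poly V E = (\<Sum>j<d. monom 1 j) + (\<Sum>x\<in>{d..<d + length L}. monom 1 (L ! (x - d)))"
    using clique_poly_split[OF s K outer] clique_poly_of_clique[OF s K] nbr_L by (simp add: VK)
  also have "(\<Sum>x\<in>{d..<d + length L}. monom 1 (L ! (x - d))) = sum_list (map (monom (1::int)) L)"
    by (simp add: sum.atLeastLessThan_shift_0 sum_list_sum_nth atLeast0LessThan)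
  finally show "clique_poly V E = (\<Sum>j<d. monom 1 j) + sum_list (map (monom 1) L)" .
qed

lemma sum_list_map_concat: "sum_list (map f (concat xss)) = sum_list (map (\<lambda>xs. sum_list (map f xs)) xss)"
  by (induction xss) auto

text \<open>Sufficiency: for each j < d add b_(j+1) - 1 pendant vertices of degree j; these
  degrees are at least k because b_1 = ... = b_k = 1.\<close>
lemma clique_vector_sufficient:
  fixes c :: "nat list"
  assumes lc: "length c = d" and pos: "\<forall>j\<in>{1..d}. coeff (b_poly c) (j - 1) > 0"
    and kd: "k \<le> d" and one: "\<forall>j\<in>{1..k}. coeff (b_poly c) (j - 1) = 1"
  shows "\<exists>(V :: nat set) E. simple_graph V E \<and> k_connected k V E \<and> chordal V E
    \<and> clique_vector V E = c"
proof -
  define n where "n j = nat (coeff (b_poly c) j - 1)" for j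
  define L where "L = concat (map (\<lambda>j. replicate (n j) j) [0..<d])"
  have pos': "coeff (b_poly c) j = 1 + int (n j)" if "j < d" for j
    using pos[rule_format, of "Suc j"] that by (simp add: n_def)
  have L_range: "\<forall>l\<in>set L. k \<le> l \<and> l < d"
  proof
    fix l assume "l \<in> set L"
    then have "l < d" "0 < n l" by (auto simp: L_def)
    moreover have "n l = 0" if "l < k" using one[rule_format, of "Suc l"] that by (simp add: n_def)
    ultimately show "k \<le> l \<and> l < d" by (metis less_irrefl not_le)
  qed
  note G = pendant_graph_properties[OF L_range kd]
  have "sum_list (map (monom 1) L) = (\<Sum>j<d. smult (int (n j)) (monom (1::int) j))"
    by (simp add: L_def sum_list_map_concat sum_list_replicate interv_sum_list_conv_sum_set_nat
        atLeast0LessThan of_nat_mult_conv_smult)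
  then have "coeff (clique_poly {0..<d + length L} (pendant_edge d L)) m = coeff (b_poly c) m" for m
    using G(5) pos' b_poly_coeff_high[of c m] lc by (auto simp: coeff_sum coeff_monom smult_monom)
  then have "b_poly (clique_vector {0..<d + length L} (pendant_edge d L)) = b_poly c"
    using b_poly_clique_vector[OF G(1)] by (auto intro: poly_eqI)
  then have "clique_vector {0..<d + length L} (pendant_edge d L) = c"
    using G(4) lc by (intro b_poly_inj) (simp_all add: clique_vector_def)
  then show ?thesis using G(1-3) by blast
qed

theorem theorem1p1:
  fixes k d :: nat and c :: "nat list"
  assumes "d \<ge> 1" and "length c = d"
  shows "(\<exists>(V :: nat set) E. simple_graph V E \<and> k_connected k V E \<and> chordal V E
              \<and> clique_vector V E = c)
     \<longleftrightarrow> ((\<forall>j\<in>{1..d}. coeff (b_poly c) (j - 1) > 0) \<and> d \<ge> k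
          \<and> (\<forall>j\<in>{1..k}. coeff (b_poly c) (j - 1) = 1))"
proof
  assume "\<exists>(V :: nat set) E. simple_graph V E \<and> k_connected k V E \<and> chordal V E
    \<and> clique_vector V E = c"
  then obtain V :: "nat set" and E where "simple_graph V E" "k_connected k V E" "chordal V E"
      "clique_vector V E = c"
    by blast
  then show "(\<forall>j\<in>{1..d}. coeff (b_poly c) (j - 1) > 0) \<and> d \<ge> k
      \<and> (\<forall>j\<in>{1..k}. coeff (b_poly c) (j - 1) = 1)"
    using clique_vector_necessary assms(2) by blast
next
  assume "(\<forall>j\<in>{1..d}. coeff (b_poly c) (j - 1) > 0) \<and> d \<ge> k
    \<and> (\<forall>j\<in>{1..k}. coeff (b_poly c) (j - 1) = 1)"
  then show "\<exists>(V :: nat set) E. simple_graph V E \<and> k_connected k V E \<and> chordal V E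
      \<and> clique_vector V E = c"
    using clique_vector_sufficient[OF assms(2)] by blast
qed

end
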